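(* Let $(J,\preccurlyeq)$ be a finite upper semilattice and let $F\colon J\to\mathrm{vect}_K$ be a filtration such that $\mathrm{supp}(\beta^0F)$ is bounded below in $J$. Then for every $d\geq 0$, \[ \langle \mathrm{supp}(\beta^{d+1}F)\rangle \subseteq \langle \mathrm{supp}(\beta^{d}F)\rangle, \] that is, $\cdots\subseteq\langle \mathrm{supp}(\beta^{2}F)\rangle\subseteq\langle \mathrm{supp}(\beta^{1}F)\rangle\subseteq\langle \mathrm{supp}(\beta^{0}F)\rangle$.
   Context: $K$ is a field and $\mathrm{vect}_K$ is the category of finite-dimensional $K$-vector spaces. A functor $F\colon J\to\mathrm{vect}_K$ is a filtration if $F(a\preccurlyeq b)$ is a monomorphism for all $a\preccurlyeq b$ in $J$. For $a\in J$, $K(a,-)\colon J\to\mathrm{vect}_K$ is the functor with $K(a,b)=K$ if $a\preccurlyeq b$ and $0$ otherwise, with identity transition maps between nonzero values. Every functor $F\colon J\to\mathrm{vect}_K$ has a minimal projective resolution $\cdots\to C_1\to C_0\to F\to 0$ (each $C_d\to\ker(C_{d-1}\to C_{d-2})$ a projective cover), unique up to isomorphism, with $C_d\cong\bigoplus_{a\in J}K(a,-)^{\beta^dF(a)}$ for uniquely determined numbers; $\beta^dF\colon J\to\mathbb N$ is the $d$-th Betti diagram and $\mathrm{supp}(\beta^dF)=\{a\mid\beta^dF(a)\neq 0\}$. An upper semilattice is a poset in which every nonempty subset has a join. For $S\subseteq J$, $\langle S\rangle:=\{\bigvee T\mid T\neq\varnothing,\ T\subseteq S\}$. *)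

theory Defs
  imports "Jordan_Normal_Form.Matrix"
begin

text \<open>Finite-dimensional K-vector spaces are modelled as K^n (carrier_vec n), linear maps
as matrices. A functor J -> vect_K is a pair (V, M): V a = dimension of F(a),
M a b = matrix of F(a \<le> b) : K^(V a) -> K^(V b).\<close>

definition is_rep :: "('j::order \<Rightarrow> nat) \<Rightarrow> ('j \<Rightarrow> 'j \<Rightarrow> 'k::field mat) \<Rightarrow> bool" where
  "is_rep V M \<longleftrightarrow>
     (\<forall>a b. a \<le> b \<longrightarrow> M a b \<in> carrier_mat (V b) (V a)) \<and>
     (\<forall>a. M a a = 1\<^sub>m (V a)) \<and>
     (\<forall>a b c. a \<le> b \<longrightarrow> b \<le> c \<longrightarrow> M b c * M a b = M a c)"

definition is_filtration :: "('j::order \<Rightarrow> nat) \<Rightarrow> ('j \<Rightarrow> 'j \<Rightarrow> 'k::field mat) \<Rightarrow> bool" where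
  "is_filtration V M \<longleftrightarrow> is_rep V M \<and>
     (\<forall>a b. a \<le> b \<longrightarrow> (\<forall>v \<in> carrier_vec (V a). M a b *\<^sub>v v = 0\<^sub>v (V b) \<longrightarrow> v = 0\<^sub>v (V a)))"

definition is_nat :: "('j::order \<Rightarrow> nat) \<Rightarrow> ('j \<Rightarrow> 'j \<Rightarrow> 'k::field mat) \<Rightarrow>
    ('j \<Rightarrow> nat) \<Rightarrow> ('j \<Rightarrow> 'j \<Rightarrow> 'k mat) \<Rightarrow> ('j \<Rightarrow> 'k mat) \<Rightarrow> bool" where
  "is_nat V M W N \<phi> \<longleftrightarrow>
     (\<forall>a. \<phi> a \<in> carrier_mat (W a) (V a)) \<and>
     (\<forall>a b. a \<le> b \<longrightarrow> N a b * \<phi> a = \<phi> b * M a b)"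

definition lincomb :: "nat \<Rightarrow> ('i \<Rightarrow> 'k::field) \<Rightarrow> ('i \<Rightarrow> 'k vec) \<Rightarrow> 'i set \<Rightarrow> 'k vec" where
  "lincomb n c v S = vec n (\<lambda>j. \<Sum>s\<in>S. c s * (v s $ j))"

definition is_basis_family :: "nat \<Rightarrow> 'i set \<Rightarrow> ('i \<Rightarrow> 'k::field vec) \<Rightarrow> bool" where
  "is_basis_family n S v \<longleftrightarrow> finite S \<and> (\<forall>s\<in>S. v s \<in> carrier_vec n) \<and>
     (\<forall>c. lincomb n c v S = 0\<^sub>v n \<longrightarrow> (\<forall>s\<in>S. c s = 0)) \<and>
     (\<forall>x\<in>carrier_vec n. \<exists>c. lincomb n c v S = x)"

text \<open>(V,M) is isomorphic to the direct sum of K(a,-)^(m a) over a in J: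
  there are generators g a i in F(a), i < m a, whose images form a basis at every b.\<close>
definition is_free_rep :: "('j::order \<Rightarrow> nat) \<Rightarrow> ('j \<Rightarrow> 'j \<Rightarrow> 'k::field mat) \<Rightarrow>
    ('j \<Rightarrow> nat) \<Rightarrow> ('j \<Rightarrow> nat \<Rightarrow> 'k vec) \<Rightarrow> bool" where
  "is_free_rep V M m g \<longleftrightarrow> is_rep V M \<and>
     (\<forall>a i. i < m a \<longrightarrow> g a i \<in> carrier_vec (V a)) \<and>
     (\<forall>b. is_basis_family (V b) {(a, i). a \<le> b \<and> i < m a} (\<lambda>(a, i). M a b *\<^sub>v g a i))"

definition is_subspace :: "nat \<Rightarrow> 'k::field vec set \<Rightarrow> bool" where
  "is_subspace n U \<longleftrightarrow> U \<subseteq> carrier_vec n \<and> 0\<^sub>v n \<in> U \<and>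
     (\<forall>x\<in>U. \<forall>y\<in>U. x + y \<in> U) \<and> (\<forall>c. \<forall>x\<in>U. c \<cdot>\<^sub>v x \<in> U)"

definition is_subfunctor :: "('j::order \<Rightarrow> nat) \<Rightarrow> ('j \<Rightarrow> 'j \<Rightarrow> 'k::field mat) \<Rightarrow>
    ('j \<Rightarrow> 'k vec set) \<Rightarrow> bool" where
  "is_subfunctor V M Q \<longleftrightarrow> (\<forall>a. is_subspace (V a) (Q a)) \<and>
     (\<forall>a b. a \<le> b \<longrightarrow> (\<forall>x\<in>Q a. M a b *\<^sub>v x \<in> Q b))"

definition img :: "'k::field mat \<Rightarrow> 'k vec set \<Rightarrow> 'k vec set" where
  "img A U = (\<lambda>x. A *\<^sub>v x) ` U"

definition kern :: "'k::field mat \<Rightarrow> 'k vec set" where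
  "kern A = {x \<in> carrier_vec (dim_col A). A *\<^sub>v x = 0\<^sub>v (dim_row A)}"

text \<open>The natural transformation phi out of (V,M), viewed as an epimorphism onto its image,
  is essential (superfluous kernel): no proper subfunctor of (V,M) maps onto the image.
  Together with projectivity this is the projective-cover condition.\<close>
definition is_essential :: "('j::order \<Rightarrow> nat) \<Rightarrow> ('j \<Rightarrow> 'j \<Rightarrow> 'k::field mat) \<Rightarrow>
    ('j \<Rightarrow> 'k mat) \<Rightarrow> bool" where
  "is_essential V M \<phi> \<longleftrightarrow>
     (\<forall>Q. is_subfunctor V M Q \<and> (\<forall>a. img (\<phi> a) (Q a) = img (\<phi> a) (carrier_vec (V a)))
          \<longrightarrow> (\<forall>a. Q a = carrier_vec (V a)))"

text \<open>A minimal projective resolution ... -> C_1 -> C_0 -> F -> 0 of F = (V,M):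
  C_d = (CV d, CM d) free with multiplicities m d (generators g d), augmentation eps : C_0 -> F,
  differentials dd d : C_(d+1) -> C_d; exact; each C_d -> ker(C_(d-1) -> C_(d-2)) a projective
  cover.\<close>
definition is_min_proj_res ::
  "('j::order \<Rightarrow> nat) \<Rightarrow> ('j \<Rightarrow> 'j \<Rightarrow> 'k::field mat) \<Rightarrow>
   (nat \<Rightarrow> 'j \<Rightarrow> nat) \<Rightarrow> (nat \<Rightarrow> 'j \<Rightarrow> 'j \<Rightarrow> 'k mat) \<Rightarrow>
   (nat \<Rightarrow> 'j \<Rightarrow> nat) \<Rightarrow> (nat \<Rightarrow> 'j \<Rightarrow> nat \<Rightarrow> 'k vec) \<Rightarrow>
   ('j \<Rightarrow> 'k mat) \<Rightarrow> (nat \<Rightarrow> 'j \<Rightarrow> 'k mat) \<Rightarrow> bool" where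
  "is_min_proj_res V M CV CM m g eps dd \<longleftrightarrow>
     (\<forall>d. is_free_rep (CV d) (CM d) (m d) (g d)) \<and>
     is_nat (CV 0) (CM 0) V M eps \<and>
     (\<forall>d. is_nat (CV (Suc d)) (CM (Suc d)) (CV d) (CM d) (dd d)) \<and>
     (\<forall>a. img (eps a) (carrier_vec (CV 0 a)) = carrier_vec (V a)) \<and>
     (\<forall>a. img (dd 0 a) (carrier_vec (CV 1 a)) = kern (eps a)) \<and>
     (\<forall>d a. img (dd (Suc d) a) (carrier_vec (CV (Suc (Suc d)) a)) = kern (dd d a)) \<and>
     is_essential (CV 0) (CM 0) eps \<and>
     (\<forall>d. is_essential (CV (Suc d)) (CM (Suc d)) (dd d))"

text \<open>In a minimal projective resolution, m d is the d-th Betti diagram (unique).\<close>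
definition supp :: "('j \<Rightarrow> nat) \<Rightarrow> 'j set" where
  "supp \<beta> = {a. \<beta> a \<noteq> 0}"

definition join_closure :: "'j::semilattice_sup set \<Rightarrow> 'j set" where
  "join_closure S = {Sup_fin T | T. T \<noteq> {} \<and> T \<subseteq> S}"

end

theory Submission
  imports Defs
begin

(* Let \<psi>: R \<rightarrow> P and \<phi>: P \<rightarrow> T be consecutive maps of the resolution: P and R are free, \<psi> is a
   projective cover of ker \<phi>, and T is a filtration (T = F, or T = C_(d-1), which is free and
   hence a filtration). Suppose R has a generator \<gamma> in a degree b outside the join closure of
   the generator degrees of P. If no generator of P lies below b then P(b) = 0. Otherwise the
   join c of the generator degrees of P below b satisfies c < b, and P(c \<le> b) is onto, so
   \<psi>_b \<gamma> = P(c \<le> b) y. As T(c \<le> b) is injective, \<phi>_c y = 0, so y = \<psi>_c r and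
   \<psi>_b \<gamma> = \<psi>_b (R(c \<le> b) r). In both cases \<psi>_b \<gamma> is already hit by the subfunctor Q of R
   spanned by all basis vectors except \<gamma>; then \<psi> restricted to Q has the same image as \<psi>,
   contradicting essentiality. Hence supp \<beta>^(d+1) \<subseteq> \<langle>supp \<beta>^d\<rangle>, and the claim follows
   because \<langle>-\<rangle> is a closure operator. *)

lemma lincomb_carrier [simp]: "lincomb n c v S \<in> carrier_vec n"
  and dim_lincomb [simp]: "dim_vec (lincomb n c v S) = n"
  by (simp_all add: lincomb_def)

lemma lincomb_add: "lincomb n c v S + lincomb n c' v S = lincomb n (\<lambda>s. c s + c' s) v S"
  by (rule eq_vecI) (auto simp: lincomb_def sum.distrib distrib_right)

lemma smult_lincomb: "k \<cdot>\<^sub>v lincomb n c v S = lincomb n (\<lambda>s. k * c s) v S"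
  by (rule eq_vecI) (auto simp: lincomb_def sum_distrib_left mult.assoc)

lemma lincomb_zero_coeffs: "lincomb n (\<lambda>_. 0) v S = 0\<^sub>v n"
  by (rule eq_vecI) (auto simp: lincomb_def)

lemma lincomb_empty: "lincomb n c v {} = 0\<^sub>v n"
  by (rule eq_vecI) (auto simp: lincomb_def)

lemma lincomb_cong:
  "(\<And>s. s \<in> S \<Longrightarrow> c s = c' s) \<Longrightarrow> (\<And>s. s \<in> S \<Longrightarrow> v s = v' s) \<Longrightarrow>
   lincomb n c v S = lincomb n c' v' S"
  unfolding lincomb_def by (intro eq_vecI) auto

lemma lincomb_extend:
  assumes "finite T" "S \<subseteq> T"
  shows "lincomb n c v S = lincomb n (\<lambda>s. if s \<in> S then c s else 0) v T"
proof (rule eq_vecI)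
  fix j assume "j < dim_vec (lincomb n (\<lambda>s. if s \<in> S then c s else 0) v T)"
  moreover have "(\<Sum>s\<in>T. (if s \<in> S then c s else 0) * v s $ j) = (\<Sum>s\<in>S. c s * v s $ j)"
    using assms by (simp add: if_distrib if_distribR sum.If_cases Int_absorb1)
  ultimately show "lincomb n c v S $ j = lincomb n (\<lambda>s. if s \<in> S then c s else 0) v T $ j"
    by (simp add: lincomb_def)
qed simp

lemma lincomb_indicator:
  assumes "finite S" "s\<^sub>0 \<in> S" "v s\<^sub>0 \<in> carrier_vec n"
  shows "lincomb n (\<lambda>s. if s = s\<^sub>0 then 1 else 0) v S = v s\<^sub>0"
  using assms by (intro eq_vecI) (auto simp: lincomb_def if_distrib if_distribR cong: if_cong)

lemma mult_mat_vec_lincomb: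
  assumes A: "A \<in> carrier_mat n k" and "finite S" and v: "\<And>s. s \<in> S \<Longrightarrow> v s \<in> carrier_vec k"
  shows "A *\<^sub>v lincomb k c v S = lincomb n c (\<lambda>s. A *\<^sub>v v s) S"
proof (rule eq_vecI)
  fix j assume "j < dim_vec (lincomb n c (\<lambda>s. A *\<^sub>v v s) S)"
  then have j: "j < n" by simp
  have "(A *\<^sub>v lincomb k c v S) $ j = (\<Sum>l<k. A $$ (j, l) * (\<Sum>s\<in>S. c s * v s $ l))"
    using A j by (simp add: scalar_prod_def lincomb_def lessThan_atLeast0)
  also have "\<dots> = (\<Sum>s\<in>S. c s * (\<Sum>l<k. A $$ (j, l) * v s $ l))"
    by (simp add: sum_distrib_left sum.swap[of _ S] mult_ac)
  also have "\<dots> = (\<Sum>s\<in>S. c s * (A *\<^sub>v v s) $ j)"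
    using A j v
    by (intro sum.cong refl) (simp add: scalar_prod_def lessThan_atLeast0 carrier_vecD[OF v])
  finally show "(A *\<^sub>v lincomb k c v S) $ j = lincomb n c (\<lambda>s. A *\<^sub>v v s) S $ j"
    using j by (simp add: lincomb_def)
qed (use A in simp)

lemma rep_transition_carrier: "is_rep V M \<Longrightarrow> a \<le> b \<Longrightarrow> M a b \<in> carrier_mat (V b) (V a)"
  and rep_transition_id: "is_rep V M \<Longrightarrow> M a a = 1\<^sub>m (V a)"
  and rep_transition_comp: "is_rep V M \<Longrightarrow> a \<le> b \<Longrightarrow> b \<le> c \<Longrightarrow> M b c * M a b = M a c"
  by (simp_all add: is_rep_def)

lemma filtration_transition_inj:
  "is_filtration V M \<Longrightarrow> a \<le> b \<Longrightarrow> v \<in> carrier_vec (V a) \<Longrightarrow> M a b *\<^sub>v v = 0\<^sub>v (V b) \<Longrightarrow> v = 0\<^sub>v (V a)"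
  by (simp add: is_filtration_def)

lemma nat_mult_transition:
  assumes "is_nat V M W N \<phi>" "a \<le> b" "M a b \<in> carrier_mat (V b) (V a)"
    "N a b \<in> carrier_mat (W b) (W a)" "v \<in> carrier_vec (V a)"
  shows "\<phi> b *\<^sub>v (M a b *\<^sub>v v) = N a b *\<^sub>v (\<phi> a *\<^sub>v v)"
proof -
  have "\<phi> b \<in> carrier_mat (W b) (V b)" "\<phi> a \<in> carrier_mat (W a) (V a)"
    "N a b * \<phi> a = \<phi> b * M a b"
    using assms(1,2) by (auto simp: is_nat_def)
  with assms(3-5) show ?thesis by (metis assoc_mult_mat_vec)
qed

lemma mult_mat_vec_add_smult:
  fixes A :: "'k::field mat"
  assumes "A \<in> carrier_mat n k" "v \<in> carrier_vec k" "w \<in> carrier_vec k"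
  shows "A *\<^sub>v (v + t \<cdot>\<^sub>v w) = A *\<^sub>v v + t \<cdot>\<^sub>v (A *\<^sub>v w)"
  using assms by (simp add: mult_add_distrib_mat_vec[OF assms(1)] mult_mat_vec[OF assms(1,3)])

lemma nat_carrier: "is_nat V M W N \<phi> \<Longrightarrow> \<phi> a \<in> carrier_mat (W a) (V a)"
  by (simp add: is_nat_def)

lemma kern_iff: "A \<in> carrier_mat n k \<Longrightarrow> x \<in> kern A \<longleftrightarrow> x \<in> carrier_vec k \<and> A *\<^sub>v x = 0\<^sub>v n"
  by (auto simp: kern_def)

definition basis_index :: "('j::order \<Rightarrow> nat) \<Rightarrow> 'j \<Rightarrow> ('j \<times> nat) set" where
  "basis_index m b = {(a, i). a \<le> b \<and> i < m a}"

definition basis_vec ::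
    "('j \<Rightarrow> 'j \<Rightarrow> 'k::semiring_0 mat) \<Rightarrow> ('j \<Rightarrow> nat \<Rightarrow> 'k vec) \<Rightarrow> 'j \<Rightarrow> 'j \<times> nat \<Rightarrow> 'k vec"
  where "basis_vec M g b = (\<lambda>(a, i). M a b *\<^sub>v g a i)"

locale free_rep =
  fixes V :: "'j::order \<Rightarrow> nat" and M :: "'j \<Rightarrow> 'j \<Rightarrow> 'k::field mat"
    and m :: "'j \<Rightarrow> nat" and g :: "'j \<Rightarrow> nat \<Rightarrow> 'k vec"
  assumes free: "is_free_rep V M m g"
begin

lemma rep: "is_rep V M"
  using free by (simp add: is_free_rep_def)

lemmas transition_carrier = rep_transition_carrier[OF rep]
  and transition_id = rep_transition_id[OF rep]
  and transition_comp = rep_transition_comp[OF rep]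

lemma gen_carrier: "i < m a \<Longrightarrow> g a i \<in> carrier_vec (V a)"
  using free by (simp add: is_free_rep_def)

lemma basis: "is_basis_family (V b) (basis_index m b) (basis_vec M g b)"
  using free by (simp add: is_free_rep_def basis_index_def basis_vec_def)

lemma finite_basis_index: "finite (basis_index m b)"
  using basis by (simp add: is_basis_family_def)

lemma basis_vec_carrier: "s \<in> basis_index m b \<Longrightarrow> basis_vec M g b s \<in> carrier_vec (V b)"
  using basis by (simp add: is_basis_family_def)

lemma basis_indep:
  "lincomb (V b) c (basis_vec M g b) (basis_index m b) = 0\<^sub>v (V b) \<Longrightarrow> s \<in> basis_index m b \<Longrightarrow> c s = 0"
  using basis by (simp add: is_basis_family_def)

lemma basis_span:
  "x \<in> carrier_vec (V b) \<Longrightarrow> \<exists>c. lincomb (V b) c (basis_vec M g b) (basis_index m b) = x"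
  using basis by (simp add: is_basis_family_def)

lemma transition_lincomb:
  assumes "x \<le> y" "S \<subseteq> basis_index m x"
  shows "M x y *\<^sub>v lincomb (V x) c (basis_vec M g x) S = lincomb (V y) c (basis_vec M g y) S"
proof -
  have "finite S"
    using assms(2) finite_basis_index finite_subset by blast
  then have "M x y *\<^sub>v lincomb (V x) c (basis_vec M g x) S
      = lincomb (V y) c (\<lambda>s. M x y *\<^sub>v basis_vec M g x s) S"
    using assms basis_vec_carrier by (intro mult_mat_vec_lincomb transition_carrier) auto
  also have "\<dots> = lincomb (V y) c (basis_vec M g y) S"
  proof (rule lincomb_cong)
    fix s assume "s \<in> S"
    then obtain a i where s: "s = (a, i)" "a \<le> x" "i < m a"
      using assms(2) by (auto simp: basis_index_def)
    then have "M x y *\<^sub>v (M a x *\<^sub>v g a i) = (M x y * M a x) *\<^sub>v g a i"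
      using assms(1) transition_carrier gen_carrier by (metis assoc_mult_mat_vec)
    then show "M x y *\<^sub>v basis_vec M g x s = basis_vec M g y s"
      using s assms(1) by (simp add: basis_vec_def transition_comp)
  qed simp
  finally show ?thesis .
qed

lemma transition_lincomb_basis:
  assumes "x \<le> y"
  shows "M x y *\<^sub>v lincomb (V x) c (basis_vec M g x) (basis_index m x)
    = lincomb (V y) (\<lambda>s. if s \<in> basis_index m x then c s else 0) (basis_vec M g y) (basis_index m y)"
proof -
  have "basis_index m x \<subseteq> basis_index m y"
    using assms by (auto simp: basis_index_def)
  then show ?thesis
    using assms by (simp add: transition_lincomb lincomb_extend finite_basis_index)
qed

lemma filtration: "is_filtration V M"
  unfolding is_filtration_def
proof (intro conjI rep allI impI ballI)
  fix a b v assume ab: "a \<le> b" and "v \<in> carrier_vec (V a)" and v0: "M a b *\<^sub>v v = 0\<^sub>v (V b)"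
  then obtain c where c: "lincomb (V a) c (basis_vec M g a) (basis_index m a) = v"
    using basis_span by blast
  have "c s = 0" if s: "s \<in> basis_index m a" for s
  proof -
    have "s \<in> basis_index m b"
      using s ab by (auto simp: basis_index_def)
    moreover have "lincomb (V b) (\<lambda>s. if s \<in> basis_index m a then c s else 0)
        (basis_vec M g b) (basis_index m b) = 0\<^sub>v (V b)"
      using v0 c transition_lincomb_basis[OF ab, of c] by simp
    ultimately show ?thesis
      using basis_indep s by fastforce
  qed
  then show "v = 0\<^sub>v (V a)"
    using c lincomb_cong[of _ c "\<lambda>_. 0"] by (simp add: lincomb_zero_coeffs)
qed

lemma zero_if_no_gens_below:
  fixes v :: "'k vec"
  assumes "\<forall>a\<in>supp m. \<not> a \<le> b" "v \<in> carrier_vec (V b)"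
  shows "v = 0\<^sub>v (V b)"
proof -
  have "basis_index m b = {}"
    using assms(1) by (auto simp: basis_index_def supp_def)
  then show ?thesis
    using basis_span[OF assms(2)] by (auto simp: lincomb_empty)
qed

lemma transition_surj:
  assumes "c \<le> b" "\<forall>a\<in>supp m. a \<le> b \<longrightarrow> a \<le> c" "v \<in> carrier_vec (V b)"
  obtains y where "y \<in> carrier_vec (V c)" "v = M c b *\<^sub>v y"
proof -
  obtain k where k: "lincomb (V b) k (basis_vec M g b) (basis_index m b) = v"
    using basis_span assms(3) by blast
  have "basis_index m b \<subseteq> basis_index m c"
    using assms(2) by (auto simp: basis_index_def supp_def)
  then have "v = M c b *\<^sub>v lincomb (V c) k (basis_vec M g c) (basis_index m b)"
    using transition_lincomb[OF assms(1)] k by simp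
  then show ?thesis
    using that[OF lincomb_carrier] by blast
qed

definition span_omitting :: "'j \<Rightarrow> 'j \<Rightarrow> 'k vec set" where
  "span_omitting b x = {lincomb (V x) c (basis_vec M g x) (basis_index m x) | c. c (b, 0) = 0}"

lemma span_omittingI:
  "c (b, 0) = 0 \<Longrightarrow> lincomb (V x) c (basis_vec M g x) (basis_index m x) \<in> span_omitting b x"
  unfolding span_omitting_def by blast

lemma span_omittingE:
  assumes "w \<in> span_omitting b x"
  obtains c where "c (b, 0) = 0" "w = lincomb (V x) c (basis_vec M g x) (basis_index m x)"
  using assms unfolding span_omitting_def by blast

lemma span_omitting_carrier: "span_omitting b x \<subseteq> carrier_vec (V x)"
  by (auto elim: span_omittingE)

lemma span_omitting_add: "v \<in> span_omitting b x \<Longrightarrow> w \<in> span_omitting b x \<Longrightarrow> v + w \<in> span_omitting b x"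
  using span_omittingI[of "\<lambda>s. _ s + _ s"] by (auto simp: lincomb_add elim!: span_omittingE)

lemma span_omitting_smult: "w \<in> span_omitting b x \<Longrightarrow> t \<cdot>\<^sub>v w \<in> span_omitting b x"
  using span_omittingI[of "\<lambda>s. t * _ s"] by (auto simp: smult_lincomb elim!: span_omittingE)

lemma span_omitting_transition:
  "x \<le> y \<Longrightarrow> w \<in> span_omitting b x \<Longrightarrow> M x y *\<^sub>v w \<in> span_omitting b y"
  using span_omittingI[of "\<lambda>s. if s \<in> basis_index m x then _ s else 0"]
  by (auto simp: transition_lincomb_basis elim!: span_omittingE)

lemma zero_in_span_omitting: "0\<^sub>v (V x) \<in> span_omitting b x"
  using span_omittingI[of "\<lambda>_. 0"] by (simp add: lincomb_zero_coeffs)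

lemma subfunctor_span_omitting: "is_subfunctor V M (span_omitting b)"
  unfolding is_subfunctor_def is_subspace_def
  using span_omitting_carrier zero_in_span_omitting span_omitting_add span_omitting_smult
    span_omitting_transition by blast

lemma gen_notin_span_omitting:
  assumes "0 < m b"
  shows "g b 0 \<notin> span_omitting b b"
proof
  assume "g b 0 \<in> span_omitting b b"
  then obtain c where c: "c (b, 0) = 0"
    "g b 0 = lincomb (V b) c (basis_vec M g b) (basis_index m b)"
    by (rule span_omittingE)
  have b0: "(b, 0) \<in> basis_index m b"
    using assms by (simp add: basis_index_def)
  have gen: "basis_vec M g b (b, 0) = g b 0"
    using gen_carrier[OF assms] by (simp add: basis_vec_def transition_id)
  let ?\<delta> = "\<lambda>s. if s = (b, 0) then 1 else 0"
  have \<delta>: "lincomb (V b) ?\<delta> (basis_vec M g b) (basis_index m b) = g b 0"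
    using lincomb_indicator[of "basis_index m b" "(b, 0)" "basis_vec M g b" "V b"]
      finite_basis_index b0 gen gen_carrier[OF assms] by simp
  have "lincomb (V b) (\<lambda>s. c s + (-1) * ?\<delta> s) (basis_vec M g b) (basis_index m b)
      = lincomb (V b) c (basis_vec M g b) (basis_index m b)
        + (-1) \<cdot>\<^sub>v lincomb (V b) ?\<delta> (basis_vec M g b) (basis_index m b)"
    by (simp only: smult_lincomb lincomb_add)
  also have "\<dots> = g b 0 + (-1) \<cdot>\<^sub>v g b 0"
    by (simp only: c(2)[symmetric] \<delta>)
  also have "\<dots> = 0\<^sub>v (V b)"
    using gen_carrier[OF assms] by (intro eq_vecI) auto
  finally have "(\<lambda>s. c s + (-1) * ?\<delta> s) (b, 0) = 0"
    using b0 by (rule basis_indep)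
  with c(1) show False
    by simp
qed

lemma transition_in_span_omitting:
  assumes "c \<le> x" "\<not> b \<le> c" "r \<in> carrier_vec (V c)"
  shows "M c x *\<^sub>v r \<in> span_omitting b x"
proof -
  obtain k where "r = lincomb (V c) k (basis_vec M g c) (basis_index m c)"
    using basis_span assms(3) by metis
  moreover have "(b, 0) \<notin> basis_index m c"
    using assms(2) by (simp add: basis_index_def)
  ultimately show ?thesis
    using assms(1) by (simp add: transition_lincomb_basis span_omittingI)
qed

lemma decompose_at_gen:
  assumes "0 < m b" "b \<le> x" "w \<in> carrier_vec (V x)"
  obtains w\<^sub>0 t where "w\<^sub>0 \<in> span_omitting b x" "w = w\<^sub>0 + t \<cdot>\<^sub>v (M b x *\<^sub>v g b 0)"
proof -
  obtain c where c: "w = lincomb (V x) c (basis_vec M g x) (basis_index m x)"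
    using basis_span assms(3) by metis
  have b0: "(b, 0) \<in> basis_index m x"
    using assms(1,2) by (simp add: basis_index_def)
  have gen: "basis_vec M g x (b, 0) \<in> carrier_vec (V x)"
    using basis_vec_carrier[OF b0] .
  let ?c\<^sub>0 = "c((b, 0) := 0)" and ?\<delta> = "\<lambda>s. if s = (b, 0) then 1 else 0"
  have \<delta>: "lincomb (V x) ?\<delta> (basis_vec M g x) (basis_index m x) = M b x *\<^sub>v g b 0"
    using lincomb_indicator[of "basis_index m x" "(b, 0)" "basis_vec M g x" "V x"]
      finite_basis_index b0 gen by (simp add: basis_vec_def)
  have "w = lincomb (V x) (\<lambda>s. ?c\<^sub>0 s + c (b, 0) * ?\<delta> s) (basis_vec M g x) (basis_index m x)"
    unfolding c by (intro lincomb_cong) auto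
  also have "\<dots> = lincomb (V x) ?c\<^sub>0 (basis_vec M g x) (basis_index m x)
      + c (b, 0) \<cdot>\<^sub>v lincomb (V x) ?\<delta> (basis_vec M g x) (basis_index m x)"
    by (simp only: smult_lincomb lincomb_add)
  also have "\<dots> = lincomb (V x) ?c\<^sub>0 (basis_vec M g x) (basis_index m x)
      + c (b, 0) \<cdot>\<^sub>v (M b x *\<^sub>v g b 0)"
    by (simp only: \<delta>)
  moreover have "lincomb (V x) ?c\<^sub>0 (basis_vec M g x) (basis_index m x) \<in> span_omitting b x"
    by (rule span_omittingI) simp
  ultimately show ?thesis
    using that by blast
qed

end

lemma join_closure_iff:
  fixes S :: "'j::semilattice_sup set"
  assumes "finite S"
  shows "x \<in> join_closure S \<longleftrightarrow> {s\<in>S. s \<le> x} \<noteq> {} \<and> Sup_fin {s\<in>S. s \<le> x} = x"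
    (is "_ \<longleftrightarrow> ?B \<noteq> {} \<and> Sup_fin ?B = x")
proof
  assume "x \<in> join_closure S"
  then obtain T where T: "T \<noteq> {}" "T \<subseteq> S" "x = Sup_fin T"
    unfolding join_closure_def by blast
  have "finite T" "finite ?B"
    using T(2) assms by (auto intro: finite_subset)
  then have "T \<subseteq> ?B"
    using T by (auto intro: Sup_fin.coboundedI)
  then have "?B \<noteq> {}" "x \<le> Sup_fin ?B"
    using T \<open>finite ?B\<close> by (auto intro: Sup_fin.subset_imp)
  moreover have "Sup_fin ?B \<le> x"
    using \<open>?B \<noteq> {}\<close> \<open>finite ?B\<close> by (intro Sup_fin.boundedI) auto
  ultimately show "?B \<noteq> {} \<and> Sup_fin ?B = x"
    by simp
next
  assume "?B \<noteq> {} \<and> Sup_fin ?B = x"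
  then have "x = Sup_fin ?B \<and> ?B \<noteq> {} \<and> ?B \<subseteq> S"
    by auto
  then show "x \<in> join_closure S"
    unfolding join_closure_def by blast
qed

lemma finite_join_closure: "finite S \<Longrightarrow> finite (join_closure S)"
proof -
  assume "finite S"
  moreover have "join_closure S \<subseteq> Sup_fin ` Pow S"
    by (auto simp: join_closure_def)
  ultimately show ?thesis
    using finite_subset by blast
qed

lemma join_closure_subsetI:
  fixes S :: "'j::semilattice_sup set"
  assumes S: "finite S" and S': "S' \<subseteq> join_closure S"
  shows "join_closure S' \<subseteq> join_closure S"
proof
  fix x assume "x \<in> join_closure S'"
  then obtain T where T: "T \<noteq> {}" "T \<subseteq> S'" "x = Sup_fin T"
    unfolding join_closure_def by blast
  have "finite T"
    using T(2) S' by (blast intro: finite_subset[OF _ finite_join_closure[OF S]])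
  define U where "U = {s\<in>S. s \<le> x}"
  have "finite U"
    using S by (simp add: U_def)
  have below_U: "{s\<in>S. s \<le> t} \<noteq> {} \<and> {s\<in>S. s \<le> t} \<subseteq> U \<and> t \<le> Sup_fin U"
    if t: "t \<in> T" for t
  proof -
    have "t \<in> join_closure S"
      using t T(2) S' by blast
    then have ne: "{s\<in>S. s \<le> t} \<noteq> {}" and t_eq: "Sup_fin {s\<in>S. s \<le> t} = t"
      unfolding join_closure_iff[OF S] by simp_all
    have "t \<le> x"
      using t T(3) \<open>finite T\<close> by (simp add: Sup_fin.coboundedI)
    then have sub: "{s\<in>S. s \<le> t} \<subseteq> U"
      by (auto simp: U_def)
    then have "Sup_fin {s\<in>S. s \<le> t} \<le> Sup_fin U"
      using ne \<open>finite U\<close> by (rule Sup_fin.subset_imp)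
    with ne sub t_eq show ?thesis
      by simp
  qed
  have "U \<noteq> {}"
    using below_U T(1) by blast
  then have "Sup_fin U \<le> x"
    using \<open>finite U\<close> by (intro Sup_fin.boundedI) (auto simp: U_def)
  moreover have "x \<le> Sup_fin U"
    unfolding T(3) using T(1) \<open>finite T\<close> below_U by (intro Sup_fin.boundedI) auto
  ultimately have "Sup_fin U = x"
    by (rule order.antisym)
  with \<open>U \<noteq> {}\<close> show "x \<in> join_closure S"
    unfolding join_closure_iff[OF S] U_def by simp
qed

lemma not_in_join_closure_cases:
  fixes S :: "'j::semilattice_sup set"
  assumes "finite S" "b \<notin> join_closure S"
  obtains "\<forall>s\<in>S. \<not> s \<le> b"
    | c where "c < b" "\<forall>s\<in>S. s \<le> b \<longrightarrow> s \<le> c"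
proof (cases "{s\<in>S. s \<le> b} = {}")
  case False
  let ?c = "Sup_fin {s\<in>S. s \<le> b}"
  have "?c \<le> b"
    using False assms(1) by (intro Sup_fin.boundedI) auto
  moreover have "?c \<noteq> b"
    using False assms(2) unfolding join_closure_iff[OF assms(1)] by blast
  moreover have "\<forall>s\<in>S. s \<le> b \<longrightarrow> s \<le> ?c"
    using assms(1) by (auto intro: Sup_fin.coboundedI)
  ultimately show ?thesis
    using that(2) by (simp add: order_less_le)
qed (use that(1) in blast)

lemma img_span_omitting_if_gen_redundant:
  assumes R: "free_rep RV RM mr gr" and P: "is_rep PV PM" and \<psi>: "is_nat RV RM PV PM \<psi>"
    and mb: "0 < mr b" and q: "q \<in> free_rep.span_omitting RV RM mr gr b b"
    and redundant: "\<psi> b *\<^sub>v gr b 0 = \<psi> b *\<^sub>v q"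
  shows "img (\<psi> x) (free_rep.span_omitting RV RM mr gr b x) = img (\<psi> x) (carrier_vec (RV x))"
proof -
  interpret R: free_rep RV RM mr gr
    by (fact R)
  let ?Q = "R.span_omitting b" and ?\<gamma> = "gr b 0"
  have "\<psi> x *\<^sub>v w \<in> img (\<psi> x) (?Q x)" if w: "w \<in> carrier_vec (RV x)" for w
  proof (cases "b \<le> x")
    case False
    then have "w \<in> ?Q x"
      using R.transition_in_span_omitting[OF order_refl False w] w by (simp add: R.transition_id)
    then show ?thesis
      by (auto simp: img_def)
  next
    case True
    obtain w\<^sub>0 t where w\<^sub>0: "w\<^sub>0 \<in> ?Q x" and w_eq: "w = w\<^sub>0 + t \<cdot>\<^sub>v (RM b x *\<^sub>v ?\<gamma>)"
      using R.decompose_at_gen[OF mb True w] .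
    have carriers: "w\<^sub>0 \<in> carrier_vec (RV x)" "q \<in> carrier_vec (RV b)" "?\<gamma> \<in> carrier_vec (RV b)"
      using w\<^sub>0 q R.span_omitting_carrier R.gen_carrier[OF mb] by auto
    have Rbx: "RM b x \<in> carrier_mat (RV x) (RV b)"
      using R.transition_carrier[OF True] .
    have "\<psi> x *\<^sub>v w = \<psi> x *\<^sub>v w\<^sub>0 + t \<cdot>\<^sub>v (\<psi> x *\<^sub>v (RM b x *\<^sub>v ?\<gamma>))"
      using w_eq carriers Rbx by (simp add: mult_mat_vec_add_smult[OF nat_carrier[OF \<psi>]])
    also have "\<psi> x *\<^sub>v (RM b x *\<^sub>v ?\<gamma>) = \<psi> x *\<^sub>v (RM b x *\<^sub>v q)"
      using nat_mult_transition[OF \<psi> True Rbx rep_transition_carrier[OF P True]] carriers redundant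
      by simp
    also have "\<psi> x *\<^sub>v w\<^sub>0 + t \<cdot>\<^sub>v (\<psi> x *\<^sub>v (RM b x *\<^sub>v q))
        = \<psi> x *\<^sub>v (w\<^sub>0 + t \<cdot>\<^sub>v (RM b x *\<^sub>v q))"
      using carriers Rbx by (simp add: mult_mat_vec_add_smult[OF nat_carrier[OF \<psi>]])
    moreover have "w\<^sub>0 + t \<cdot>\<^sub>v (RM b x *\<^sub>v q) \<in> ?Q x"
      using w\<^sub>0 q True
      by (intro R.span_omitting_add R.span_omitting_smult R.span_omitting_transition)
    ultimately show ?thesis
      by (auto simp: img_def)
  qed
  then show ?thesis
    using R.span_omitting_carrier[of b x] unfolding img_def by blast
qed

lemma essential_gen_not_redundant:
  assumes R: "free_rep RV RM mr gr" and P: "is_rep PV PM" and \<psi>: "is_nat RV RM PV PM \<psi>"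
    and ess: "is_essential RV RM \<psi>" and mb: "0 < mr b"
  shows "\<psi> b *\<^sub>v gr b 0 \<notin> img (\<psi> b) (free_rep.span_omitting RV RM mr gr b b)"
proof
  assume "\<psi> b *\<^sub>v gr b 0 \<in> img (\<psi> b) (free_rep.span_omitting RV RM mr gr b b)"
  then obtain q where "q \<in> free_rep.span_omitting RV RM mr gr b b" "\<psi> b *\<^sub>v gr b 0 = \<psi> b *\<^sub>v q"
    by (auto simp: img_def)
  with img_span_omitting_if_gen_redundant[OF R P \<psi> mb] ess free_rep.subfunctor_span_omitting[OF R]
  have "free_rep.span_omitting RV RM mr gr b b = carrier_vec (RV b)"
    by (simp add: is_essential_def)
  then show False
    using free_rep.gen_notin_span_omitting[OF R mb] free_rep.gen_carrier[OF R mb] by simp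
qed

lemma kernel_in_img_span_omitting:
  fixes b :: "'j::semilattice_sup"
  assumes P: "free_rep PV PM mp gp" and R: "free_rep RV RM mr gr" and T: "is_filtration TV TM"
    and \<phi>: "is_nat PV PM TV TM \<phi>" and \<psi>: "is_nat RV RM PV PM \<psi>"
    and exact: "\<forall>x. img (\<psi> x) (carrier_vec (RV x)) = kern (\<phi> x)"
    and fin: "finite (supp mp)" and b: "b \<notin> join_closure (supp mp)" and v: "v \<in> kern (\<phi> b)"
  shows "v \<in> img (\<psi> b) (free_rep.span_omitting RV RM mr gr b b)"
proof -
  interpret P: free_rep PV PM mp gp
    by (fact P)
  interpret R: free_rep RV RM mr gr
    by (fact R)
  have v_carrier: "v \<in> carrier_vec (PV b)" and \<phi>v: "\<phi> b *\<^sub>v v = 0\<^sub>v (TV b)"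
    using v kern_iff[OF nat_carrier[OF \<phi>]] by auto
  from fin b show ?thesis
  proof (cases rule: not_in_join_closure_cases)
    case 1
    then have "v = 0\<^sub>v (PV b)"
      using P.zero_if_no_gens_below[OF _ v_carrier] by simp
    also have "\<dots> = \<psi> b *\<^sub>v 0\<^sub>v (RV b)"
      using nat_carrier[OF \<psi>, of b] by (intro eq_vecI) (auto simp: mult_mat_vec_def)
    finally show ?thesis
      using R.zero_in_span_omitting by (auto simp: img_def)
  next
    case (2 c)
    then have cb: "c \<le> b" and "\<not> b \<le> c"
      by auto
    obtain y where y: "y \<in> carrier_vec (PV c)" "v = PM c b *\<^sub>v y"
      using P.transition_surj[OF cb 2(2) v_carrier] .
    have T_rep: "is_rep TV TM"
      using T by (simp add: is_filtration_def)
    have "TM c b *\<^sub>v (\<phi> c *\<^sub>v y) = 0\<^sub>v (TV b)"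
      using nat_mult_transition[OF \<phi> cb P.transition_carrier[OF cb]
          rep_transition_carrier[OF T_rep cb] y(1)]
        y(2) \<phi>v by simp
    then have "\<phi> c *\<^sub>v y = 0\<^sub>v (TV c)"
      by (rule filtration_transition_inj[OF T cb mult_mat_vec_carrier[OF nat_carrier[OF \<phi>] y(1)]])
    then have "y \<in> kern (\<phi> c)"
      using y(1) kern_iff[OF nat_carrier[OF \<phi>]] by simp
    then obtain r where r: "r \<in> carrier_vec (RV c)" "y = \<psi> c *\<^sub>v r"
      using exact by (auto simp: img_def)
    have "v = \<psi> b *\<^sub>v (RM c b *\<^sub>v r)"
      using nat_mult_transition[OF \<psi> cb R.transition_carrier[OF cb] P.transition_carrier[OF cb] r(1)]
        y(2) r(2)
      by simp
    moreover have "RM c b *\<^sub>v r \<in> R.span_omitting b b"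
      using R.transition_in_span_omitting[OF cb \<open>\<not> b \<le> c\<close> r(1)] .
    ultimately show ?thesis
      by (auto simp: img_def)
  qed
qed

lemma essential_cover_supp_subset_join_closure:
  fixes PV :: "'j::semilattice_sup \<Rightarrow> nat"
  assumes P: "free_rep PV PM mp gp" and R: "free_rep RV RM mr gr" and T: "is_filtration TV TM"
    and \<phi>: "is_nat PV PM TV TM \<phi>" and \<psi>: "is_nat RV RM PV PM \<psi>"
    and exact: "\<forall>x. img (\<psi> x) (carrier_vec (RV x)) = kern (\<phi> x)"
    and ess: "is_essential RV RM \<psi>" and fin: "finite (supp mp)"
  shows "supp mr \<subseteq> join_closure (supp mp)"
proof
  fix b assume "b \<in> supp mr"
  then have mb: "0 < mr b"
    by (simp add: supp_def)
  show "b \<in> join_closure (supp mp)"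
  proof (rule ccontr)
    assume b: "b \<notin> join_closure (supp mp)"
    have "\<psi> b *\<^sub>v gr b 0 \<in> kern (\<phi> b)"
      using exact free_rep.gen_carrier[OF R mb] by (auto simp: img_def)
    then have "\<psi> b *\<^sub>v gr b 0 \<in> img (\<psi> b) (free_rep.span_omitting RV RM mr gr b b)"
      by (rule kernel_in_img_span_omitting[OF P R T \<phi> \<psi> exact fin b])
    with essential_gen_not_redundant[OF R free_rep.rep[OF P] \<psi> ess mb] show False
      by blast
  qed
qed

theorem corollary4p3:
  fixes V :: "'j::{finite, semilattice_sup} \<Rightarrow> nat"
    and M :: "'j \<Rightarrow> 'j \<Rightarrow> 'k::field mat"
    and CV :: "nat \<Rightarrow> 'j \<Rightarrow> nat" and CM :: "nat \<Rightarrow> 'j \<Rightarrow> 'j \<Rightarrow> 'k mat"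
    and m :: "nat \<Rightarrow> 'j \<Rightarrow> nat" and g :: "nat \<Rightarrow> 'j \<Rightarrow> nat \<Rightarrow> 'k vec"
    and eps :: "'j \<Rightarrow> 'k mat" and dd :: "nat \<Rightarrow> 'j \<Rightarrow> 'k mat"
  assumes "is_filtration V M"
    and "is_min_proj_res V M CV CM m g eps dd"
    and "\<exists>l. \<forall>a \<in> supp (m 0). l \<le> a"
  shows "\<forall>d. join_closure (supp (m (Suc d))) \<subseteq> join_closure (supp (m d))"
proof -
  have free: "\<And>d. free_rep (CV d) (CM d) (m d) (g d)"
    and nat0: "is_nat (CV 0) (CM 0) V M eps"
    and nat: "\<And>d. is_nat (CV (Suc d)) (CM (Suc d)) (CV d) (CM d) (dd d)"
    and exact0: "\<forall>a. img (dd 0 a) (carrier_vec (CV (Suc 0) a)) = kern (eps a)"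
    and exact: "\<And>d. \<forall>a. img (dd (Suc d) a) (carrier_vec (CV (Suc (Suc d)) a)) = kern (dd d a)"
    and ess: "\<And>d. is_essential (CV (Suc d)) (CM (Suc d)) (dd d)"
    using assms(2) by (simp_all add: is_min_proj_res_def free_rep_def)
  have step: "supp (m (Suc d)) \<subseteq> join_closure (supp (m d))" for d
  proof (cases d)
    case 0
    then show ?thesis
      using essential_cover_supp_subset_join_closure[OF free free assms(1) nat0 nat exact0 ess]
      by simp
  next
    case (Suc e)
    then show ?thesis
      using essential_cover_supp_subset_join_closure[OF free free free_rep.filtration[OF free]
          nat nat exact ess]
      by simp
  qed
  then show ?thesis
    by (simp add: join_closure_subsetI)
qed

end
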